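(* For every integer $k\ge0$, the following identity of rational functions in $x$ and $q$ holds: \[ \tilde\sigma_{-k-1}=(1-x^{-1})\sum_{j=-k}^{k}\frac{R_{k,j}}{x+x^{-1}-q^j-q^{-j}},\qquad R_{k,j}=-\frac{(-1)^{k+j}q^{\binom{j+1}{2}+\binom{k+1}{2}}}{(q;q)_{k-j}(q;q)_{k+j}}, \] where $\tilde\sigma_{-k-1}=\frac{(-1)^kq^{\binom{k+1}{2}}}{(x;q)_{k+1}(qx^{-1};q)_k}$ and $\binom{j+1}{2}=\frac{j(j+1)}{2}$ for all $j\in\mathbb{Z}$.
   Context: $(a;q)_n=\prod_{j=0}^{n-1}(1-aq^j)$. The quantity $R_{k,j}$ is the residue of $\tilde\sigma_{-k-1}(x)\,dx$ at $x=q^j$. *)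

theory Defs
  imports Complex_Main
begin

definition qpoch :: "complex \<Rightarrow> complex \<Rightarrow> nat \<Rightarrow> complex" where
  "qpoch a q n = (\<Prod>j<n. 1 - a * q ^ j)"

definition tri :: "int \<Rightarrow> int" where
  "tri j = j * (j + 1) div 2"

definition sigma_tilde :: "nat \<Rightarrow> complex \<Rightarrow> complex \<Rightarrow> complex" where
  "sigma_tilde k x q =
     (-1) ^ k * q powi tri (int k) / (qpoch x q (k + 1) * qpoch (q / x) q k)"

definition Rkj :: "nat \<Rightarrow> int \<Rightarrow> complex \<Rightarrow> complex" where
  "Rkj k j q =
     - ((-1) powi (int k + j) * q powi (tri j + tri (int k))
        / (qpoch q q (nat (int k - j)) * qpoch q q (nat (int k + j))))"

end

theory Submission
  imports Defs
begin

(*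
  Write y = x + 1/x and qsym q l = q^l + q^-l.  Pairing the factors 1 - x q^i and 1 - q^i/x
  of the denominator of sigma_tilde gives -q^i (y - qsym q i), and (1 - x)(1 - 1/x) equals
  -(y - qsym q 0); hence sigma_tilde = -(1 - 1/x) / prod_{j=0..k} (y - qsym q j).
  The nodes qsym q 0, ..., qsym q k are distinct as (q;q)_(2k) /= 0, so partial fractions in y reduce the claim
  to the coefficient identities R_{k,j} + R_{k,-j} = -1 / prod_{l /= j} (qsym q j - qsym q l)
  for 0 < j <= k and R_{k,0} = -1 / prod_{l /= 0} (qsym q 0 - qsym q l).  These products are
  q-Pochhammer symbols, since q^j (qsym q j - qsym q l) = (1 - q^(j-l)) (1 - q^(j+l)).
*)

lemma Suc_choose_two: "Suc n choose 2 = (n choose 2) + n"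
  by (simp add: numeral_2_eq_2)

lemma choose_two_add_Suc_choose_two:
  "(j choose 2) + (Suc (j + d) choose 2) = j * j + d * j + (Suc d choose 2)"
proof (induction d)
  case 0
  show ?case by (induction j) (auto simp: Suc_choose_two)
next
  case (Suc d)
  then show ?case by (simp add: Suc_choose_two)
qed

lemma tri_of_nat: "tri (int n) = int (Suc n choose 2)"
  unfolding tri_def choose_two by (simp add: zdiv_int algebra_simps)

lemma tri_uminus_of_nat: "tri (- int n) = int (n choose 2)"
  unfolding tri_def choose_two by (cases n) (simp_all add: zdiv_int algebra_simps)

lemma two_factor_partial_fractions:
  fixes x b c :: "'a::field"
  assumes "x \<noteq> b" "x \<noteq> c" "b \<noteq> c"
  shows "1 / ((x - b) * (x - c)) = 1 / ((c - b) * (x - c)) + 1 / ((b - c) * (x - b))"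
  using assms by (simp add: divide_simps) (simp add: algebra_simps)

lemma inverse_prod_partial_fractions:
  fixes a :: "'i \<Rightarrow> 'a::field"
  assumes "finite S" "S \<noteq> {}" "inj_on a S" "x \<notin> a ` S"
  shows "1 / (\<Prod>i\<in>S. x - a i) = (\<Sum>i\<in>S. 1 / ((x - a i) * (\<Prod>l\<in>S - {i}. a i - a l)))"
  using assms
proof (induction S arbitrary: x rule: finite_ne_induct)
  case (singleton b)
  show ?case by simp
next
  case (insert b F)
  let ?P = "\<lambda>i. \<Prod>l\<in>F - {i}. a i - a l"
  have inj: "inj_on a F" and b_notin: "a b \<notin> a ` F" and x_notin: "x \<notin> a ` F" and "x \<noteq> a b"
    using insert by auto
  have P_insert: "(\<Prod>l\<in>insert b F - {i}. a i - a l) = (a i - a b) * ?P i" if "i \<in> F" for i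
  proof -
    have "insert b F - {i} = insert b (F - {i})" using that insert.hyps(3) by auto
    then show ?thesis using insert.hyps(1,3) by simp
  qed
  have split: "1 / ((x - a b) * (x - a i) * ?P i)
      = 1 / ((x - a i) * ((a i - a b) * ?P i)) + 1 / ((x - a b) * ((a b - a i) * ?P i))"
    if "i \<in> F" for i
  proof -
    have "x \<noteq> a i" "a b \<noteq> a i" using that x_notin b_notin by auto
    with \<open>x \<noteq> a b\<close> have "1 / ((x - a b) * (x - a i))
        = 1 / ((a i - a b) * (x - a i)) + 1 / ((a b - a i) * (x - a b))"
      by (intro two_factor_partial_fractions)
    then have "1 / ((x - a b) * (x - a i)) / ?P i
        = 1 / ((a i - a b) * (x - a i)) / ?P i + 1 / ((a b - a i) * (x - a b)) / ?P i"
      by (simp add: add_divide_distrib)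
    then show ?thesis by (simp only: divide_divide_eq_left ac_simps)
  qed
  have "1 / (\<Prod>i\<in>insert b F. x - a i) = 1 / (x - a b) * (1 / (\<Prod>i\<in>F. x - a i))"
    using insert.hyps by simp
  also have "\<dots> = (\<Sum>i\<in>F. 1 / ((x - a b) * (x - a i) * ?P i))"
    unfolding insert.IH[OF inj x_notin] sum_distrib_left by (simp add: mult.assoc)
  also have "\<dots> = (\<Sum>i\<in>F. 1 / ((x - a i) * ((a i - a b) * ?P i)))
      + (\<Sum>i\<in>F. 1 / ((x - a b) * ((a b - a i) * ?P i)))"
    by (simp add: split sum.distrib)
  also have "\<dots> = (\<Sum>i\<in>F. 1 / ((x - a i) * (\<Prod>l\<in>insert b F - {i}. a i - a l)))
      + 1 / (x - a b) * (1 / (\<Prod>i\<in>F. a b - a i))"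
    unfolding insert.IH[OF inj b_notin] sum_distrib_left by (simp add: P_insert)
  also have "\<dots> = (\<Sum>i\<in>insert b F. 1 / ((x - a i) * (\<Prod>l\<in>insert b F - {i}. a i - a l)))"
    using insert.hyps by (simp add: insert_Diff_if)
  finally show ?case .
qed

lemma qpoch_0 [simp]: "qpoch a q 0 = 1"
  by (simp add: qpoch_def)

lemma qpoch_Suc: "qpoch a q (Suc n) = qpoch a q n * (1 - a * q ^ n)"
  by (simp add: qpoch_def)

lemma qpoch_Suc_shift: "qpoch a q (Suc n) = (1 - a) * qpoch (a * q) q n"
  unfolding qpoch_def prod.lessThan_Suc_shift by (simp add: mult.assoc)

lemma qpoch_add: "qpoch a q (m + n) = qpoch a q m * qpoch (a * q ^ m) q n"
  by (induction n) (simp_all add: qpoch_Suc power_add mult.assoc)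

lemma qpoch_nonzero_le:
  assumes "qpoch a q n \<noteq> 0" "m \<le> n"
  shows "qpoch a q m \<noteq> 0"
  using assms qpoch_add[of a q m "n - m"] by auto

lemma power_ne_one_if_qpoch_nonzero:
  assumes "qpoch q q n \<noteq> 0" "0 < i" "i \<le> n"
  shows "q ^ i \<noteq> 1"
proof
  assume "q ^ i = 1"
  then have "qpoch q q i = 0"
    using \<open>0 < i\<close> by (cases i) (simp_all add: qpoch_Suc)
  with assms qpoch_nonzero_le show False by blast
qed

lemma one_plus_power_mult_qpoch:
  assumes "0 < n"
  shows "(1 + q ^ n) * qpoch (q ^ n) q n = qpoch (q ^ Suc n) q n"
proof -
  obtain m where n: "n = Suc m" using assms by (cases n) auto
  have "(1 + q ^ n) * qpoch (q ^ n) q n = (1 - q ^ (n + n)) * qpoch (q ^ Suc n) q m"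
    unfolding n qpoch_Suc_shift by (simp add: power_add algebra_simps)
  also have "\<dots> = qpoch (q ^ Suc n) q n"
    unfolding n qpoch_Suc by (simp add: power_add mult.commute)
  finally show ?thesis .
qed

definition qsym :: "complex \<Rightarrow> nat \<Rightarrow> complex" where
  "qsym q l = q ^ l + inverse (q ^ l)"

lemma qsym_0 [simp]: "qsym q 0 = 2"
  by (simp add: qsym_def)

lemma qsym_diff_factor:
  assumes "q \<noteq> 0"
  shows "q ^ (m + j) * (qsym q j - qsym q m) = (q ^ m - q ^ j) * (1 - q ^ (m + j))"
  using assms unfolding qsym_def by (simp add: power_add field_simps)

lemma inj_on_qsym:
  assumes "q \<noteq> 0" "qpoch q q (2 * k) \<noteq> 0"
  shows "inj_on (qsym q) {0..k}"
proof -
  have "qsym q j \<noteq> qsym q m" if "j < m" "m \<le> k" for j m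
  proof -
    have "q ^ (m - j) \<noteq> 1" "q ^ (m + j) \<noteq> 1"
      using that power_ne_one_if_qpoch_nonzero[OF assms(2)] by auto
    moreover have "q ^ m - q ^ j = q ^ j * (q ^ (m - j) - 1)"
      using that by (simp add: algebra_simps flip: power_add)
    ultimately have "q ^ (m + j) * (qsym q j - qsym q m) \<noteq> 0"
      unfolding qsym_diff_factor[OF assms(1)] using assms(1) by simp
    then show ?thesis by simp
  qed
  then show ?thesis
    by (intro inj_onI) (metis atLeastAtMost_iff linorder_neq_iff)
qed

lemma prod_qsym_below:
  assumes "q \<noteq> 0"
  shows "q ^ (j * j) * (\<Prod>l<j. qsym q j - qsym q l) = qpoch q q j * qpoch (q ^ j) q j"
proof -
  have "q ^ (j * j) * (\<Prod>l<j. qsym q j - qsym q l) = (\<Prod>l<j. q ^ j * (qsym q j - qsym q l))"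
    by (simp add: prod.distrib power_mult)
  also have "\<dots> = (\<Prod>l<j. (1 - q ^ (j - l)) * (1 - q ^ (j + l)))"
  proof (rule prod.cong)
    fix l assume "l \<in> {..<j}"
    then obtain e where "j = l + e" by (metis lessThan_iff less_imp_add_positive)
    then show "q ^ j * (qsym q j - qsym q l) = (1 - q ^ (j - l)) * (1 - q ^ (j + l))"
      using assms unfolding qsym_def by (simp add: power_add field_simps)
  qed simp
  also have "\<dots> = (\<Prod>l<j. 1 - q ^ (j - l)) * (\<Prod>l<j. 1 - q ^ (j + l))"
    by (rule prod.distrib)
  also have "(\<Prod>l<j. 1 - q ^ (j - l)) = qpoch q q j"
    using prod.nat_diff_reindex[of "\<lambda>i. 1 - q ^ Suc i" j]
    by (simp add: qpoch_def Suc_diff_Suc)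
  also have "(\<Prod>l<j. 1 - q ^ (j + l)) = qpoch (q ^ j) q j"
    by (simp add: qpoch_def power_add)
  finally show ?thesis .
qed

lemma prod_qsym_above:
  assumes "q \<noteq> 0"
  shows "q ^ (d * j + (Suc d choose 2)) * (\<Prod>m\<in>{Suc j..j + d}. qsym q j - qsym q m)
     = (-1) ^ d * qpoch q q d * qpoch (q ^ (2 * j + 1)) q d"
proof (induction d)
  case 0
  then show ?case by (simp add: numeral_2_eq_2)
next
  case (Suc d)
  have factor: "q ^ Suc (j + d) * (qsym q j - qsym q (Suc (j + d)))
      = - ((1 - q * q ^ d) * (1 - q ^ (2 * j + 1) * q ^ d))"
  proof -
    have "q ^ (2 * j + 1) = q * q ^ j * q ^ j" by (simp add: mult_2 power_add)
    then show ?thesis using assms unfolding qsym_def by (simp add: power_add field_simps)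
  qed
  have "{Suc j..j + Suc d} = insert (Suc (j + d)) {Suc j..j + d}" by auto
  then have "q ^ (Suc d * j + (Suc (Suc d) choose 2)) * (\<Prod>m\<in>{Suc j..j + Suc d}. qsym q j - qsym q m)
      = q ^ (d * j + (Suc d choose 2)) * (\<Prod>m\<in>{Suc j..j + d}. qsym q j - qsym q m)
        * (q ^ Suc (j + d) * (qsym q j - qsym q (Suc (j + d))))"
    by (simp add: Suc_choose_two power_add algebra_simps)
  then show ?case
    unfolding Suc.IH factor by (simp add: qpoch_Suc algebra_simps)
qed

lemma prod_qsym_diff_others:
  assumes "q \<noteq> 0" "0 < j"
  shows "(1 + q ^ j) * q ^ (j * j + d * j + (Suc d choose 2))
      * (\<Prod>l\<in>{0..j + d} - {j}. qsym q j - qsym q l)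
    = (-1) ^ d * qpoch q q d * qpoch q q (2 * j + d)"
proof -
  have split: "{0..j + d} - {j} = {..<j} \<union> {Suc j..j + d}" by auto
  have "(\<Prod>l\<in>{0..j + d} - {j}. qsym q j - qsym q l)
      = (\<Prod>l<j. qsym q j - qsym q l) * (\<Prod>m\<in>{Suc j..j + d}. qsym q j - qsym q m)"
    unfolding split by (rule prod.union_disjoint) auto
  then have "(1 + q ^ j) * q ^ (j * j + d * j + (Suc d choose 2))
      * (\<Prod>l\<in>{0..j + d} - {j}. qsym q j - qsym q l)
    = (1 + q ^ j) * (q ^ (j * j) * (\<Prod>l<j. qsym q j - qsym q l))
      * (q ^ (d * j + (Suc d choose 2)) * (\<Prod>m\<in>{Suc j..j + d}. qsym q j - qsym q m))"
    by (simp add: power_add algebra_simps)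
  also have "\<dots> = (-1) ^ d * qpoch q q d
      * (qpoch q q j * ((1 + q ^ j) * qpoch (q ^ j) q j) * qpoch (q ^ (2 * j + 1)) q d)"
    unfolding prod_qsym_below[OF assms(1)] prod_qsym_above[OF assms(1)] by (simp add: algebra_simps)
  also have "\<dots> = (-1) ^ d * qpoch q q d * qpoch q q (2 * j + d)"
    unfolding one_plus_power_mult_qpoch[OF assms(2)]
    using qpoch_add[of q q "j + j" d] qpoch_add[of q q j j]
    by (simp add: mult_2 power_add mult.assoc)
  finally show ?thesis .
qed

lemma prod_qsym_diff_others_0:
  assumes "q \<noteq> 0"
  shows "q ^ (Suc d choose 2) * (\<Prod>l\<in>{0..d} - {0}. qsym q 0 - qsym q l)
    = (-1) ^ d * qpoch q q d * qpoch q q d"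
proof -
  have "{0..d} - {0} = {Suc 0..0 + d}" by auto
  then show ?thesis using prod_qsym_above[OF assms, of d 0] by simp
qed

lemma Rkj_of_nat:
  "Rkj (j + d) (int j) q
    = - ((-1) ^ d * q ^ ((Suc j choose 2) + (Suc (j + d) choose 2))
         / (qpoch q q d * qpoch q q (2 * j + d)))"
proof -
  have "nat (int (j + d) - int j) = d" "nat (int (j + d) + int j) = 2 * j + d" by auto
  moreover have "(-1::complex) powi (int (j + d) + int j) = (-1) ^ d"
    by (simp add: power_int_add power_add flip: mult_2)
  moreover have "q powi (tri (int j) + tri (int (j + d))) = q ^ ((Suc j choose 2) + (Suc (j + d) choose 2))"
    unfolding tri_of_nat by (simp only: of_nat_add[symmetric] power_int_of_nat)
  ultimately show ?thesis unfolding Rkj_def by simp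
qed

lemma Rkj_uminus_of_nat:
  "Rkj (j + d) (- int j) q
    = - ((-1) ^ d * q ^ ((j choose 2) + (Suc (j + d) choose 2))
         / (qpoch q q (2 * j + d) * qpoch q q d))"
proof -
  have "nat (int (j + d) - - int j) = 2 * j + d" "nat (int (j + d) + - int j) = d" by auto
  moreover have "(-1::complex) powi (int (j + d) + - int j) = (-1) ^ d"
    by simp
  moreover have "q powi (tri (- int j) + tri (int (j + d))) = q ^ ((j choose 2) + (Suc (j + d) choose 2))"
    unfolding tri_of_nat tri_uminus_of_nat by (simp only: of_nat_add[symmetric] power_int_of_nat)
  ultimately show ?thesis unfolding Rkj_def by simp
qed

lemma Rkj_add_Rkj_uminus:
  assumes "q \<noteq> 0" "0 < j" "qpoch q q d \<noteq> 0" "qpoch q q (2 * j + d) \<noteq> 0"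
  shows "Rkj (j + d) (int j) q + Rkj (j + d) (- int j) q
    = - 1 / (\<Prod>l\<in>{0..j + d} - {j}. qsym q j - qsym q l)"
proof -
  define E where "E = j * j + d * j + (Suc d choose 2)"
  define D where "D = (\<Prod>l\<in>{0..j + d} - {j}. qsym q j - qsym q l)"
  define P where "P = qpoch q q d * qpoch q q (2 * j + d)"
  have diff_prod: "(1 + q ^ j) * q ^ E * D = (-1) ^ d * P"
    unfolding E_def D_def P_def using prod_qsym_diff_others[OF assms(1,2)] by (simp add: mult.assoc)
  have "P \<noteq> 0" unfolding P_def using assms(3,4) by simp
  have "(-1) ^ d * ((-1) ^ d * P) = P" by (simp flip: mult.assoc power_mult_distrib)
  with diff_prod have P_eq: "P = (-1) ^ d * ((1 + q ^ j) * q ^ E) * D" by (simp add: mult.assoc)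
  have "(Suc j choose 2) + (Suc (j + d) choose 2) = E + j" "(j choose 2) + (Suc (j + d) choose 2) = E"
    unfolding E_def using choose_two_add_Suc_choose_two[of j d] by (simp_all add: Suc_choose_two)
  then have "Rkj (j + d) (int j) q + Rkj (j + d) (- int j) q = - ((-1) ^ d * ((1 + q ^ j) * q ^ E) / P)"
    unfolding Rkj_of_nat Rkj_uminus_of_nat P_def by (simp add: power_add add_divide_distrib algebra_simps)
  also have "\<dots> = - 1 / D"
    using \<open>P \<noteq> 0\<close> unfolding P_eq by simp
  finally show ?thesis unfolding D_def .
qed

lemma Rkj_zero:
  assumes "q \<noteq> 0" "qpoch q q d \<noteq> 0"
  shows "Rkj d 0 q = - 1 / (\<Prod>l\<in>{0..d} - {0}. qsym q 0 - qsym q l)"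
proof -
  define E where "E = Suc d choose 2"
  define D where "D = (\<Prod>l\<in>{0..d} - {0}. qsym q 0 - qsym q l)"
  define P where "P = qpoch q q d * qpoch q q d"
  have diff_prod: "q ^ E * D = (-1) ^ d * P"
    unfolding E_def D_def P_def using prod_qsym_diff_others_0[OF assms(1)] by (simp add: mult.assoc)
  have "P \<noteq> 0" unfolding P_def using assms(2) by simp
  have "(-1) ^ d * ((-1) ^ d * P) = P" by (simp flip: mult.assoc power_mult_distrib)
  with diff_prod have P_eq: "P = (-1) ^ d * q ^ E * D" by (simp add: mult.assoc)
  have "Rkj d 0 q = - ((-1) ^ d * q ^ E / P)"
    using Rkj_of_nat[of 0 d q] unfolding E_def P_def by (simp add: numeral_2_eq_2)
  also have "\<dots> = - 1 / D"
    using \<open>P \<noteq> 0\<close> unfolding P_eq by simp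
  finally show ?thesis unfolding D_def .
qed

lemma qpoch_mult_qpoch_div_eq_prod_qsym:
  assumes "x \<noteq> 0" "q \<noteq> 0"
  shows "qpoch x q (Suc k) * qpoch (q / x) q k
    = (1 - x) * (-1) ^ k * q ^ (Suc k choose 2) * (\<Prod>i\<in>{1..k}. x + inverse x - qsym q i)"
proof (induction k)
  case 0
  then show ?case by (simp add: qpoch_Suc numeral_2_eq_2)
next
  case (Suc k)
  have factor: "(1 - x * q ^ Suc k) * (1 - q / x * q ^ k) = - (q ^ Suc k) * (x + inverse x - qsym q (Suc k))"
    using assms unfolding qsym_def by (simp add: field_simps)
  have "qpoch x q (Suc (Suc k)) * qpoch (q / x) q (Suc k)
    = qpoch x q (Suc k) * qpoch (q / x) q k * ((1 - x * q ^ Suc k) * (1 - q / x * q ^ k))"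
    by (simp only: qpoch_Suc ac_simps)
  also have "\<dots> = (1 - x) * (-1) ^ k * q ^ (Suc k choose 2) * (\<Prod>i\<in>{1..k}. x + inverse x - qsym q i)
      * (- (q ^ Suc k) * (x + inverse x - qsym q (Suc k)))"
    unfolding Suc.IH factor ..
  also have "\<dots> = (1 - x) * (-1) ^ Suc k * q ^ (Suc (Suc k) choose 2)
      * (\<Prod>i\<in>{1..Suc k}. x + inverse x - qsym q i)"
    by (simp add: Suc_choose_two power_add algebra_simps)
  finally show ?case .
qed

lemma sigma_tilde_eq_inverse_prod_qsym:
  assumes "x \<noteq> 0" "q \<noteq> 0"
  shows "sigma_tilde k x q = - (1 - inverse x) / (\<Prod>j\<in>{0..k}. x + inverse x - qsym q j)"
proof -
  define Q where "Q = (\<Prod>i\<in>{1..k}. x + inverse x - qsym q i)"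
  have "{0..k} = insert 0 {1..k}" by auto
  then have prod_eq: "(\<Prod>j\<in>{0..k}. x + inverse x - qsym q j) = (x + inverse x - 2) * Q"
    unfolding Q_def by simp
  have "sigma_tilde k x q = (-1) ^ k * q ^ (Suc k choose 2) / ((1 - x) * (-1) ^ k * q ^ (Suc k choose 2) * Q)"
    unfolding sigma_tilde_def tri_of_nat power_int_of_nat Q_def
    using qpoch_mult_qpoch_div_eq_prod_qsym[OF assms] by simp
  also have "\<dots> = 1 / ((1 - x) * Q)"
    using assms(2) by simp
  also have "\<dots> = - (1 - inverse x) / ((x + inverse x - 2) * Q)"
  proof (cases "x = 1")
    case False
    have cancel: "1 / (b * Q) = - a / (- (b * a) * Q)" if "a \<noteq> 0" for a b :: complex
      using nonzero_divide_mult_cancel_left[OF that, of "b * Q"] by (simp add: ac_simps)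
    have "x + inverse x - 2 = - ((1 - x) * (1 - inverse x))"
      using assms(1) by (simp add: field_simps)
    moreover have "1 - inverse x \<noteq> 0" using False by simp
    ultimately show ?thesis by (simp only: cancel)
  qed simp
  finally show ?thesis unfolding prod_eq .
qed

lemma sum_int_symmetric:
  "(\<Sum>j = - int k..int k. f j) = f 0 + (\<Sum>j\<in>{1..k}. f (int j) + f (- int j))"
proof (induction k)
  case 0
  then show ?case by simp
next
  case (Suc k)
  have "{- int (Suc k)..int (Suc k)} = insert (int (Suc k)) (insert (- int (Suc k)) {- int k..int k})"
    by auto
  moreover have "{1..Suc k} = insert (Suc k) {1..k}" by auto
  ultimately show ?case using Suc.IH by (simp add: algebra_simps)
qed

lemma sum_Rkj_eq_partial_fractions:
  assumes "q \<noteq> 0" "qpoch q q (2 * k) \<noteq> 0"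
  shows "(\<Sum>j = - int k..int k. Rkj k j q / (y - qsym q (nat \<bar>j\<bar>)))
    = - (\<Sum>j\<in>{0..k}. 1 / ((y - qsym q j) * (\<Prod>l\<in>{0..k} - {j}. qsym q j - qsym q l)))"
proof -
  define D where "D j = (\<Prod>l\<in>{0..k} - {j}. qsym q j - qsym q l)" for j
  have coeff: "Rkj k (int j) q + Rkj k (- int j) q = - 1 / D j" if "j \<in> {1..k}" for j
  proof -
    have "j \<le> k" using that by simp
    then obtain d where k: "k = j + d" using le_Suc_ex by blast
    have "qpoch q q d \<noteq> 0" "qpoch q q (2 * j + d) \<noteq> 0"
      using qpoch_nonzero_le[OF assms(2)] k by auto
    then show ?thesis unfolding D_def k using that by (intro Rkj_add_Rkj_uminus[OF assms(1)]) auto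
  qed
  have coeff0: "Rkj k 0 q = - 1 / D 0"
    unfolding D_def using Rkj_zero[OF assms(1)] qpoch_nonzero_le[OF assms(2)] by simp
  have "{0..k} = insert 0 {1..k}" by auto
  then have "(\<Sum>j\<in>{0..k}. 1 / ((y - qsym q j) * D j))
      = 1 / ((y - qsym q 0) * D 0) + (\<Sum>j\<in>{1..k}. 1 / ((y - qsym q j) * D j))"
    by simp
  moreover have "(\<Sum>j = - int k..int k. Rkj k j q / (y - qsym q (nat \<bar>j\<bar>)))
      = Rkj k 0 q / (y - qsym q 0)
        + (\<Sum>j\<in>{1..k}. (Rkj k (int j) q + Rkj k (- int j) q) / (y - qsym q j))"
    unfolding sum_int_symmetric by (simp add: add_divide_distrib)
  ultimately show ?thesis
    unfolding D_def[symmetric] using coeff coeff0 by (simp add: sum_negf mult.commute)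
qed

theorem lemma5p3:
  fixes k :: nat and x q :: complex
  assumes "x \<noteq> 0" and "q \<noteq> 0"
    and "qpoch x q (k + 1) \<noteq> 0"
    and "qpoch (q / x) q k \<noteq> 0"
    and "qpoch q q (2 * k) \<noteq> 0"
    and "\<forall>j\<in>{-int k..int k}. x + inverse x - q powi j - q powi (-j) \<noteq> 0"
  shows "sigma_tilde k x q =
    (1 - inverse x) * (\<Sum>j = -int k..int k. Rkj k j q / (x + inverse x - q powi j - q powi (-j)))"
proof -
  define y where "y = x + inverse x"
  have den: "x + inverse x - q powi j - q powi (- j) = y - qsym q (nat \<bar>j\<bar>)" for j
    unfolding y_def qsym_def by (cases j rule: int_cases2) (auto simp: power_int_minus)
  have "y - qsym q j \<noteq> 0" if "j \<le> k" for j
    using assms(6) that unfolding den by force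
  then have "y \<notin> qsym q ` {0..k}" by fastforce
  then have "1 / (\<Prod>j\<in>{0..k}. y - qsym q j)
      = (\<Sum>j\<in>{0..k}. 1 / ((y - qsym q j) * (\<Prod>l\<in>{0..k} - {j}. qsym q j - qsym q l)))"
    by (intro inverse_prod_partial_fractions inj_on_qsym assms(2,5)) auto
  moreover have "sigma_tilde k x q = - (1 - inverse x) * (1 / (\<Prod>j\<in>{0..k}. y - qsym q j))"
    unfolding sigma_tilde_eq_inverse_prod_qsym[OF assms(1,2)] y_def by simp
  ultimately show ?thesis
    unfolding den sum_Rkj_eq_partial_fractions[OF assms(2,5)] by (simp add: left_diff_distrib)
qed

end
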